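(* Let $\mathbf{k}$ be a field and $m\ge2$. Let $u\in{\sf{Bir}}(\mathbb{P}^m_\mathbf{k})$ be a diagonal linear transformation, $u(x_1,\dots,x_m)=(u_1x_1,\dots,u_mx_m)$ in affine coordinates, with $u_i\in\mathbf{k}^\times$. Then $u$ is at least exponentially distorted in ${\sf{Bir}}(\mathbb{P}^m_\mathbf{k})$: there is a finitely generated subgroup $\Gamma\le{\sf{Bir}}(\mathbb{P}^m_\mathbf{k})$ containing $u$ with $\exp(n)\preceq\delta^\Gamma_u(n)$ (where $\delta^\Gamma_u=\infty$ if $u$ has finite order).
   Context: For functions, $f\preceq g$ means there are $C,C',C''>0$ with $f(x)\le Cg(C'x)+C''$. For a finitely generated group $\Gamma$ with finite symmetric generating set $S\ni1$ and $c\in\Gamma$, $\delta_{c,S}(n)=\sup\{m\in\mathbf{N}: c^m\in S^n\}$; its $\simeq$-class $\delta^\Gamma_c$ is independent of $S$. *)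

theory Defs
  imports "HOL-Library.Poly_Mapping" "HOL-Computational_Algebra.Fraction_Field"
    "HOL-Algebra.Generated_Groups" "HOL-Library.Extended_Real"
begin

text \<open>Polynomials in the variables indexed by the finite type 'n (so m = CARD('n))
  over the field 'k, and the rational function field k(x_1,...,x_m).\<close>
type_synonym ('n, 'k) mpoly = "('n \<Rightarrow>\<^sub>0 nat) \<Rightarrow>\<^sub>0 'k"
type_synonym ('n, 'k) ratfun = "('n, 'k) mpoly fract"

definition rconst :: "'k::field \<Rightarrow> ('n::{finite,linorder}, 'k) ratfun" where
  "rconst c = Fraction_Field.Fract (Poly_Mapping.single 0 c) 1"

definition rvar :: "'n::{finite,linorder} \<Rightarrow> ('n, 'k::field) ratfun" where
  "rvar i = Fraction_Field.Fract (Poly_Mapping.single (Poly_Mapping.single i 1) 1) 1"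

definition k_aut :: "(('n::{finite,linorder}, 'k::field) ratfun \<Rightarrow> ('n, 'k) ratfun) \<Rightarrow> bool" where
  "k_aut \<sigma> \<longleftrightarrow> bij \<sigma> \<and> (\<forall>a b. \<sigma> (a + b) = \<sigma> a + \<sigma> b) \<and> (\<forall>a b. \<sigma> (a * b) = \<sigma> a * \<sigma> b)
      \<and> (\<forall>c. \<sigma> (rconst c) = rconst c)"

text \<open>The Cremona group Bir(P^m_k): a birational map f is identified with its pullback
  f^* on the function field; since (f o g)^* = g^* o f^*, the group law is reversed composition.\<close>
definition Bir :: "(('n::{finite,linorder}, 'k::field) ratfun \<Rightarrow> ('n, 'k) ratfun) monoid" where
  "Bir = \<lparr>carrier = {\<sigma>. k_aut \<sigma>}, mult = (\<lambda>\<sigma> \<tau>. \<tau> \<circ> \<sigma>), one = id\<rparr>"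

definition word_ball :: "('a, 'b) monoid_scheme \<Rightarrow> 'a set \<Rightarrow> nat \<Rightarrow> 'a set" where
  "word_ball G S n = {foldr (\<otimes>\<^bsub>G\<^esub>) xs \<one>\<^bsub>G\<^esub> | xs. set xs \<subseteq> S \<and> length xs = n}"

definition distortion :: "('a, 'b) monoid_scheme \<Rightarrow> 'a set \<Rightarrow> 'a \<Rightarrow> nat \<Rightarrow> enat" where
  "distortion G S c n = Sup {enat m | m. c [^]\<^bsub>G\<^esub> m \<in> word_ball G S n}"

definition asym_preceq :: "(nat \<Rightarrow> real) \<Rightarrow> (nat \<Rightarrow> enat) \<Rightarrow> bool" where
  "asym_preceq f g \<longleftrightarrow> (\<exists>C (C'::nat) C''. C > 0 \<and> C' > 0 \<and> C'' > 0 \<and>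
      (\<forall>x. ereal (f x) \<le> ereal C * ereal_of_enat (g (C' * x)) + ereal C''))"

end

theory Submission
  imports Defs "HOL-Library.Function_Algebras"
begin

text \<open>
  Write u = diag a for the pullback of x \<mapsto> (a_1 x_1, ..., a_m x_m) and split it into the
  diagonal maps d = diag (1(i := a i)), each moving a single coordinate. For such a d pick k \<noteq> i
  and let G be the monomial shear with exponent matrix M = [[2,1],[1,1]] on the coordinates i, k.
  Conjugation by G acts on the diagonal entries through M, so (G^n d G^-n)(G^-n d G^n) acts
  through M^n + M^-n, which is tr(M^n) = L_2n times the identity because det M = 1: it equals
  d^L_2n for an even-index Lucas number L_2n \<ge> 2^n. Hence u^L_2n is a word of length O(n) in u,
  the d's, the shears and their inverses, which gives exp(n) \<preceq> delta_u(n).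
\<close>

lemma power_fun_apply: "(f ^ n) x = f x ^ n"
  by (induction n) simp_all

lemma prod_list_fun_apply: "prod_list fs x = (\<Prod>f\<leftarrow>fs. f x)"
  by (induction fs) simp_all

lemma prod_list_fun_upd_1:
  fixes a :: "'a::finite \<Rightarrow> 'b::comm_monoid_mult"
  assumes "distinct L" "set L = UNIV"
  shows "(\<Prod>i\<leftarrow>L. 1(i := a i)) = a"
proof
  fix j
  have "(\<Prod>i\<leftarrow>L. 1(i := a i)) j = (\<Prod>i\<in>UNIV. (1(i := a i)) j)"
    using prod.distinct_set_conv_list[OF assms(1), of "\<lambda>i. (1(i := a i)) j"] assms(2)
    by (simp add: prod_list_fun_apply comp_def)
  also have "\<dots> = (\<Prod>i\<in>UNIV. if i = j then a j else 1)"
    by (intro prod.cong) auto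
  finally show "(\<Prod>i\<leftarrow>L. 1(i := a i)) j = a j"
    by simp
qed

lemma funpow_invariant: "(\<And>x. P x \<Longrightarrow> P (f x)) \<Longrightarrow> P x \<Longrightarrow> P ((f ^^ n) x)"
  by (induction n) simp_all

lemma funpow_conj:
  assumes "\<And>x. P x \<Longrightarrow> P (f x)" and "\<And>x. P x \<Longrightarrow> \<phi> (f x) = g \<circ> \<phi> x \<circ> h" and "P x"
  shows "\<phi> ((f ^^ n) x) = g ^^ n \<circ> \<phi> x \<circ> h ^^ n"
proof (induction n)
  case (Suc n)
  have "P ((f ^^ n) x)"
    using assms(1,3) by (rule funpow_invariant)
  then have "\<phi> ((f ^^ Suc n) x) = g \<circ> \<phi> ((f ^^ n) x) \<circ> h"
    using assms(2) by simp
  also have "\<dots> = g ^^ Suc n \<circ> \<phi> x \<circ> h ^^ Suc n"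
    by (simp only: Suc.IH funpow.simps(2)[where f = g] funpow_Suc_right[where f = h] comp_assoc)
  finally show ?case .
qed simp

lemma ex_fixpoint_free_map:
  assumes "card (UNIV :: 'a::finite set) \<ge> 2"
  obtains k :: "'a::finite \<Rightarrow> 'a" where "\<And>i. i \<noteq> k i"
proof -
  have "\<exists>j. j \<noteq> i" for i :: 'a
  proof (rule ccontr)
    assume "\<nexists>j. j \<noteq> i"
    then have "(UNIV :: 'a set) = {i}"
      by auto
    then have "card (UNIV :: 'a set) = card {i}"
      by (rule arg_cong)
    with assms show False
      by simp
  qed
  then show ?thesis
    using that by metis
qed

lemma poly_mapping_sum_single:
  "p = (\<Sum>v\<in>Poly_Mapping.keys p. Poly_Mapping.single v (Poly_Mapping.lookup p v))"
  by (simp add: poly_mapping_eq_iff fun_eq_iff lookup_sum lookup_single when_def in_keys_iff)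

section \<open>Word balls and distortion\<close>

lemma distortion_ge: "c [^]\<^bsub>G\<^esub> m \<in> word_ball G S n \<Longrightarrow> enat m \<le> distortion G S c n"
  unfolding distortion_def by (rule Sup_upper) blast

lemma (in group) inv_in_symmetric_closure:
  assumes "X \<subseteq> carrier G" "s \<in> insert \<one> (X \<union> m_inv G ` X)"
  shows "inv s \<in> insert \<one> (X \<union> m_inv G ` X)"
  using assms by (auto simp: subset_iff)

context monoid
begin

lemma foldr_mult_closed: "set xs \<subseteq> carrier G \<Longrightarrow> foldr (\<otimes>) xs \<one> \<in> carrier G"
  by (induction xs) simp_all

lemma foldr_mult_append:
  "set xs \<subseteq> carrier G \<Longrightarrow> set ys \<subseteq> carrier G \<Longrightarrow>
    foldr (\<otimes>) (xs @ ys) \<one> = foldr (\<otimes>) xs \<one> \<otimes> foldr (\<otimes>) ys \<one>"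
  by (induction xs) (simp_all add: foldr_mult_closed m_assoc)

lemma word_ball_subset_carrier: "S \<subseteq> carrier G \<Longrightarrow> word_ball G S n \<subseteq> carrier G"
  unfolding word_ball_def using foldr_mult_closed by blast

lemma one_in_word_ball: "\<one> \<in> word_ball G S 0"
  unfolding word_ball_def by force

lemma word_ball_incl: "S \<subseteq> carrier G \<Longrightarrow> s \<in> S \<Longrightarrow> s \<in> word_ball G S 1"
  unfolding word_ball_def by (intro CollectI exI[of _ "[s]"]) auto

lemma word_ball_mult:
  assumes "S \<subseteq> carrier G" "x \<in> word_ball G S n" "y \<in> word_ball G S m"
  shows "x \<otimes> y \<in> word_ball G S (n + m)"
proof -
  obtain xs ys where "x = foldr (\<otimes>) xs \<one>" "set xs \<subseteq> S" "length xs = n"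
    and "y = foldr (\<otimes>) ys \<one>" "set ys \<subseteq> S" "length ys = m"
    using assms(2,3) by (auto simp: word_ball_def)
  then show ?thesis
    using assms(1) foldr_mult_append[of xs ys] unfolding word_ball_def
    by (intro CollectI exI[of _ "xs @ ys"]) auto
qed

lemma word_ball_pow: "S \<subseteq> carrier G \<Longrightarrow> s \<in> S \<Longrightarrow> s [^] n \<in> word_ball G S n"
proof (induction n)
  case (Suc n)
  then have "s [^] n \<otimes> s \<in> word_ball G S (n + 1)"
    by (intro word_ball_mult word_ball_incl)
  then show ?case
    by simp
qed (simp add: one_in_word_ball)

lemma word_ball_mono:
  assumes "S \<subseteq> carrier G" "\<one> \<in> S" "n \<le> m"
  shows "word_ball G S n \<subseteq> word_ball G S m"
proof
  fix x
  assume x: "x \<in> word_ball G S n"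
  then have "x \<otimes> \<one> [^] (m - n) \<in> word_ball G S (n + (m - n))"
    using assms(1,2) by (intro word_ball_mult word_ball_pow)
  moreover have "x \<in> carrier G"
    using x word_ball_subset_carrier[OF assms(1)] by blast
  ultimately show "x \<in> word_ball G S m"
    using assms(3) by simp
qed

lemma word_ball_foldr:
  "S \<subseteq> carrier G \<Longrightarrow> set xs \<subseteq> word_ball G S m \<Longrightarrow>
    foldr (\<otimes>) xs \<one> \<in> word_ball G S (length xs * m)"
  by (induction xs) (simp_all add: one_in_word_ball word_ball_mult)

lemma exp_preceq_distortion:
  fixes f :: "nat \<Rightarrow> nat"
  assumes S: "S \<subseteq> carrier G" "\<one> \<in> S" and "K > 0"
    and f_ge: "\<And>n. 2 ^ n \<le> f n" and f_word: "\<And>n. c [^] f n \<in> word_ball G S (K * Suc n)"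
  shows "asym_preceq (\<lambda>n. exp (real n)) (distortion G S c)"
  unfolding asym_preceq_def
proof (intro exI[of _ "1::real"] exI[of _ "3 * K"] exI[of _ "1::real"] conjI allI)
  fix x :: nat
  have exp_le_f: "exp (real x) \<le> real (f (2 * x))"
  proof -
    have "exp (real x) = exp 1 ^ x"
      by (simp add: exp_of_nat_mult[symmetric])
    also have "\<dots> \<le> 4 ^ x"
      using exp_le by (intro power_mono) simp_all
    also have "\<dots> = real (2 ^ (2 * x))"
      by (simp add: power_mult)
    also have "\<dots> \<le> real (f (2 * x))"
      using f_ge by (simp only: of_nat_le_iff)
    finally show ?thesis .
  qed
  have f_le_distortion: "real (f (2 * x)) \<le> ereal_of_enat (distortion G S c (3 * K * x))" if "x > 0"
  proof -
    have "K * Suc (2 * x) \<le> 3 * K * x"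
      using that by simp
    then have "c [^] f (2 * x) \<in> word_ball G S (3 * K * x)"
      using f_word word_ball_mono[OF S] by blast
    then show ?thesis
      by (metis distortion_ge ereal_of_enat_le_iff ereal_of_enat_simps(1))
  qed
  show "ereal (exp (real x)) \<le> ereal 1 * ereal_of_enat (distortion G S c (3 * K * x)) + ereal 1"
  proof (cases "x = 0")
    case True
    then show ?thesis
      by (simp add: ereal_of_enat_nonneg add_increasing)
  next
    case False
    have "ereal (exp (real x)) \<le> ereal (real (f (2 * x)))"
      using exp_le_f by simp
    also have "\<dots> \<le> ereal_of_enat (distortion G S c (3 * K * x))"
      using False f_le_distortion by simp
    finally show ?thesis
      by (simp add: add_increasing2)
  qed
qed (use \<open>K > 0\<close> in simp_all)

end

definition monomial_map ::
    "('a \<Rightarrow> 'b) \<Rightarrow> ('a \<Rightarrow> 'k::comm_semiring_1) \<Rightarrow> ('a \<Rightarrow>\<^sub>0 'k) \<Rightarrow> ('b \<Rightarrow>\<^sub>0 'k)" where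
  "monomial_map T \<chi> p =
     (\<Sum>v\<in>Poly_Mapping.keys p. Poly_Mapping.single (T v) (\<chi> v * Poly_Mapping.lookup p v))"

lemma monomial_map_conv_sum:
  assumes "finite A" "Poly_Mapping.keys p \<subseteq> A"
  shows "monomial_map T \<chi> p = (\<Sum>v\<in>A. Poly_Mapping.single (T v) (\<chi> v * Poly_Mapping.lookup p v))"
  unfolding monomial_map_def by (rule sum.mono_neutral_left[OF assms]) (auto simp: in_keys_iff)

lemma monomial_map_zero [simp]: "monomial_map T \<chi> 0 = 0"
  by (simp add: monomial_map_def)

lemma monomial_map_single [simp]:
  "monomial_map T \<chi> (Poly_Mapping.single v c) = Poly_Mapping.single (T v) (\<chi> v * c)"
  by (cases "c = 0") (simp_all add: monomial_map_def)

lemma monomial_map_add: "monomial_map T \<chi> (p + q) = monomial_map T \<chi> p + monomial_map T \<chi> q"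
proof -
  let ?A = "Poly_Mapping.keys p \<union> Poly_Mapping.keys q"
  let ?m = "\<lambda>r. \<Sum>v\<in>?A. Poly_Mapping.single (T v) (\<chi> v * Poly_Mapping.lookup r v)"
  have "monomial_map T \<chi> (p + q) = ?m (p + q)"
    by (rule monomial_map_conv_sum) (simp_all add: keys_add)
  also have "\<dots> = ?m p + ?m q"
    by (simp add: lookup_add distrib_left single_add sum.distrib)
  also have "\<dots> = monomial_map T \<chi> p + monomial_map T \<chi> q"
    by (simp add: monomial_map_conv_sum[where A = ?A])
  finally show ?thesis .
qed

lemma monomial_map_sum: "monomial_map T \<chi> (\<Sum>i\<in>I. f i) = (\<Sum>i\<in>I. monomial_map T \<chi> (f i))"
  by (induction I rule: infinite_finite_induct) (simp_all add: monomial_map_add)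

lemma monomial_map_mult:
  assumes T: "\<And>v w. T (v + w) = T v + T w" and \<chi>: "\<And>v w. \<chi> (v + w) = \<chi> v * \<chi> w"
  shows "monomial_map T \<chi> (p * q) = monomial_map T \<chi> p * monomial_map T \<chi> q"
proof -
  let ?c = "Poly_Mapping.lookup"
  have "p * q = (\<Sum>v\<in>Poly_Mapping.keys p. \<Sum>w\<in>Poly_Mapping.keys q.
      Poly_Mapping.single (v + w) (?c p v * ?c q w))"
    by (subst poly_mapping_sum_single[of p], subst poly_mapping_sum_single[of q])
      (simp add: sum_product mult_single)
  moreover have "monomial_map T \<chi> p * monomial_map T \<chi> q =
      (\<Sum>v\<in>Poly_Mapping.keys p. \<Sum>w\<in>Poly_Mapping.keys q.
      Poly_Mapping.single (T (v + w)) (\<chi> (v + w) * (?c p v * ?c q w)))"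
    by (simp add: monomial_map_def sum_product mult_single T \<chi> mult_ac)
  ultimately show ?thesis
    by (simp add: monomial_map_sum)
qed

lemma lookup_monomial_map:
  assumes "inj T"
  shows "Poly_Mapping.lookup (monomial_map T \<chi> p) (T v) = \<chi> v * Poly_Mapping.lookup p v"
proof -
  have "Poly_Mapping.lookup (monomial_map T \<chi> p) (T v) =
      (\<Sum>w\<in>Poly_Mapping.keys p. if w = v then \<chi> w * Poly_Mapping.lookup p w else 0)"
    using assms by (auto simp: monomial_map_def lookup_sum lookup_single when_def inj_eq
        intro!: sum.cong)
  then show ?thesis
    by (simp add: in_keys_iff)
qed

lemma monomial_map_eq_0_iff:
  fixes \<chi> :: "'a \<Rightarrow> 'k::idom"
  assumes "inj T" "\<And>v. \<chi> v \<noteq> 0"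
  shows "monomial_map T \<chi> p = 0 \<longleftrightarrow> p = 0"
proof
  assume "monomial_map T \<chi> p = 0"
  then have "\<chi> v * Poly_Mapping.lookup p v = 0" for v
    by (metis lookup_monomial_map[OF assms(1)] lookup_zero)
  then show "p = 0"
    using assms(2) by (simp add: poly_mapping_eq_iff fun_eq_iff)
qed simp

section \<open>Extending injective ring homomorphisms to fraction fields\<close>

text \<open>Well defined only when h is an injective ring homomorphism, as in the locale below.\<close>

definition fract_map :: "('a::idom \<Rightarrow> 'b::idom) \<Rightarrow> 'a fract \<Rightarrow> 'b fract" where
  "fract_map h x = (SOME y. \<exists>a b. b \<noteq> 0 \<and> x = Fraction_Field.Fract a b
     \<and> y = Fraction_Field.Fract (h a) (h b))"

locale inj_idom_hom =
  fixes h :: "'a::idom \<Rightarrow> 'b::idom"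
  assumes hom_add: "h (a + b) = h a + h b"
    and hom_mult: "h (a * b) = h a * h b"
    and hom_one: "h 1 = 1"
    and hom_nonzero: "b \<noteq> 0 \<Longrightarrow> h b \<noteq> 0"
begin

lemma fract_map_Fract:
  assumes "b \<noteq> 0"
  shows "fract_map h (Fraction_Field.Fract a b) = Fraction_Field.Fract (h a) (h b)"
  unfolding fract_map_def
proof (rule some_equality)
  fix y
  assume "\<exists>a' b'. b' \<noteq> 0 \<and> Fraction_Field.Fract a b = Fraction_Field.Fract a' b'
    \<and> y = Fraction_Field.Fract (h a') (h b')"
  then obtain a' b' where b': "b' \<noteq> 0" and "Fraction_Field.Fract a b = Fraction_Field.Fract a' b'"
    and y: "y = Fraction_Field.Fract (h a') (h b')"
    by blast
  then have "h a * h b' = h a' * h b"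
    using assms by (simp add: eq_fract flip: hom_mult)
  then show "y = Fraction_Field.Fract (h a) (h b)"
    using assms b' y hom_nonzero by (simp add: eq_fract)
qed (use assms in blast)

lemma fract_map_Fract_1: "fract_map h (Fraction_Field.Fract a 1) = Fraction_Field.Fract (h a) 1"
  by (simp add: fract_map_Fract hom_one)

lemma fract_map_add: "fract_map h (x + y) = fract_map h x + fract_map h y"
  by (cases x; cases y) (simp add: fract_map_Fract hom_add hom_mult hom_nonzero)

lemma fract_map_mult: "fract_map h (x * y) = fract_map h x * fract_map h y"
  by (cases x; cases y) (simp add: fract_map_Fract hom_mult hom_nonzero)

end

lemma inj_idom_hom_monomial_map:
  fixes T :: "'a::{ordered_cancel_comm_monoid_add,linorder} \<Rightarrow> 'a" and \<chi> :: "'a \<Rightarrow> 'k::field"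
  assumes T: "\<And>v w. T (v + w) = T v + T w" "T 0 = 0" "inj T"
    and \<chi>: "\<And>v w. \<chi> (v + w) = \<chi> v * \<chi> w" "\<chi> 0 = 1" "\<And>v. \<chi> v \<noteq> 0"
  shows "inj_idom_hom (monomial_map T \<chi>)"
proof
  show "monomial_map T \<chi> (p * q) = monomial_map T \<chi> p * monomial_map T \<chi> q" for p q
    using T(1) \<chi>(1) by (rule monomial_map_mult)
  have "monomial_map T \<chi> (Poly_Mapping.single 0 1) = Poly_Mapping.single 0 1"
    by (simp only: monomial_map_single T(2) \<chi>(2) mult_1)
  then show "monomial_map T \<chi> 1 = 1"
    by simp
  show "p \<noteq> 0 \<Longrightarrow> monomial_map T \<chi> p \<noteq> 0" for p
    by (simp add: monomial_map_eq_0_iff[OF T(3) \<chi>(3)])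
  show "monomial_map T \<chi> (p + q) = monomial_map T \<chi> p + monomial_map T \<chi> q" for p q
    by (rule monomial_map_add)
qed

definition rmonom :: "('n::{finite,linorder} \<Rightarrow>\<^sub>0 nat) \<Rightarrow> ('n, 'k::field) ratfun" where
  "rmonom v = Fraction_Field.Fract (Poly_Mapping.single v 1) 1"

lemma rconst_mult:
  "rconst (a * b) = (rconst a * rconst b :: ('n::{finite,linorder}, 'k::field) ratfun)"
  by (simp add: rconst_def mult_single)

lemma rconst_1 [simp]: "rconst 1 = (1 :: ('n::{finite,linorder}, 'k::field) ratfun)"
  by (simp add: rconst_def fract_collapse)

lemma rconst_0 [simp]: "rconst 0 = (0 :: ('n::{finite,linorder}, 'k::field) ratfun)"
  by (simp add: rconst_def fract_collapse)

lemma rvar_nonzero [simp]: "rvar i \<noteq> (0 :: ('n::{finite,linorder}, 'k::field) ratfun)"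
  by (simp add: rvar_def Zero_fract_def eq_fract) (metis lookup_single_eq lookup_zero one_neq_zero)

lemma rmonom_0 [simp]: "rmonom 0 = 1"
  by (simp add: rmonom_def fract_collapse)

lemma rmonom_add:
  "rmonom (v + w) = (rmonom v * rmonom w :: ('n::{finite,linorder}, 'k::field) ratfun)"
  by (simp add: rmonom_def mult_single)

lemma rmonom_single_1: "rmonom (Poly_Mapping.single i 1) = rvar i"
  by (simp add: rvar_def rmonom_def)

lemma rmonom_single:
  "rmonom (Poly_Mapping.single i n) = (rvar i ^ n :: ('n::{finite,linorder}, 'k::field) ratfun)"
proof (induction n)
  case (Suc n)
  have "Poly_Mapping.single i (Suc n) = Poly_Mapping.single i 1 + Poly_Mapping.single i n"
    by (simp flip: single_add)
  then show ?case
    using Suc by (simp add: rmonom_add rmonom_single_1[unfolded One_nat_def])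
qed simp

lemma rmonom_eq_prod:
  "rmonom v =
    (\<Prod>i\<in>UNIV. rvar i ^ Poly_Mapping.lookup v i :: ('n::{finite,linorder}, 'k::field) ratfun)"
proof -
  have "v = (\<Sum>i\<in>UNIV. Poly_Mapping.single i (Poly_Mapping.lookup v i))"
    by (simp add: poly_mapping_eq_iff fun_eq_iff lookup_sum lookup_single when_def)
  moreover have "rmonom (\<Sum>i\<in>I. Poly_Mapping.single i (Poly_Mapping.lookup v i)) =
      (\<Prod>i\<in>I. rvar i ^ Poly_Mapping.lookup v i :: ('n, 'k) ratfun)" for I
    by (induction I rule: infinite_finite_induct) (simp_all add: rmonom_add rmonom_single)
  ultimately show ?thesis
    by metis
qed

lemma Fract_single:
  "Fraction_Field.Fract (Poly_Mapping.single v c) 1 =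
    (rconst c * rmonom v :: ('n::{finite,linorder}, 'k::field) ratfun)"
  by (simp add: rconst_def rmonom_def mult_single)

lemma Fract_poly_eq_sum:
  "Fraction_Field.Fract p 1 = (\<Sum>v\<in>Poly_Mapping.keys p.
     rconst (Poly_Mapping.lookup p v) * rmonom v :: ('n::{finite,linorder}, 'k::field) ratfun)"
proof -
  have Fract_sum: "Fraction_Field.Fract (\<Sum>v\<in>V. f v) 1 = (\<Sum>v\<in>V. Fraction_Field.Fract (f v) 1)"
    for V and f :: "('n \<Rightarrow>\<^sub>0 nat) \<Rightarrow> ('n, 'k) mpoly"
  proof (induction V rule: infinite_finite_induct)
    case (insert v V)
    then show ?case
      by (simp flip: insert.IH)
  qed (simp_all add: fract_collapse)
  show ?thesis
    by (subst poly_mapping_sum_single[of p]) (simp add: Fract_sum Fract_single)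
qed

lemma ratfun_induct [case_names rconst rvar add mult inverse]:
  fixes P :: "('n::{finite,linorder}, 'k::field) ratfun \<Rightarrow> bool"
  assumes rconst: "\<And>c. P (rconst c)" and rvar: "\<And>i. P (rvar i)"
    and add: "\<And>x y. P x \<Longrightarrow> P y \<Longrightarrow> P (x + y)"
    and mult: "\<And>x y. P x \<Longrightarrow> P y \<Longrightarrow> P (x * y)"
    and inverse: "\<And>x. P x \<Longrightarrow> P (inverse x)"
  shows "P x"
proof -
  have one: "P 1" and zero: "P 0"
    using rconst[of 1] rconst[of 0] by simp_all
  have prod: "P (prod f I)" if "\<And>i. P (f i)" for f and I :: "'a set"
    using that by (induction I rule: infinite_finite_induct) (simp_all add: one mult)
  have sum: "P (sum f I)" if "\<And>i. P (f i)" for f and I :: "'a set"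
    using that by (induction I rule: infinite_finite_induct) (simp_all add: zero add)
  have power: "P (y ^ n)" if "P y" for y n
    using that by (induction n) (simp_all add: one mult)
  have "P (rmonom v)" for v
    unfolding rmonom_eq_prod by (intro prod power rvar)
  then have poly: "P (Fraction_Field.Fract p 1)" for p
    unfolding Fract_poly_eq_sum by (intro sum mult rconst)
  obtain p q where "x = Fraction_Field.Fract p q"
    by (cases x) auto
  then have "x = Fraction_Field.Fract p 1 * inverse (Fraction_Field.Fract q 1)"
    by simp
  then show ?thesis
    using poly mult inverse by metis
qed

definition k_hom :: "(('n::{finite,linorder}, 'k::field) ratfun \<Rightarrow> ('n, 'k) ratfun) \<Rightarrow> bool" where
  "k_hom \<sigma> \<longleftrightarrow> (\<forall>a b. \<sigma> (a + b) = \<sigma> a + \<sigma> b) \<and> (\<forall>a b. \<sigma> (a * b) = \<sigma> a * \<sigma> b)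
     \<and> (\<forall>c. \<sigma> (rconst c) = rconst c)"

lemma k_aut_iff: "k_aut \<sigma> \<longleftrightarrow> bij \<sigma> \<and> k_hom \<sigma>"
  by (auto simp: k_aut_def k_hom_def)

lemma k_hom_add: "k_hom \<sigma> \<Longrightarrow> \<sigma> (x + y) = \<sigma> x + \<sigma> y"
  and k_hom_mult: "k_hom \<sigma> \<Longrightarrow> \<sigma> (x * y) = \<sigma> x * \<sigma> y"
  and k_hom_rconst: "k_hom \<sigma> \<Longrightarrow> \<sigma> (rconst c) = rconst c"
  by (simp_all add: k_hom_def)

lemma k_hom_0: "k_hom \<sigma> \<Longrightarrow> \<sigma> 0 = 0"
  and k_hom_1: "k_hom \<sigma> \<Longrightarrow> \<sigma> 1 = 1"
  using k_hom_rconst[of \<sigma> 0] k_hom_rconst[of \<sigma> 1] by simp_all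

lemma k_hom_inverse:
  assumes "k_hom \<sigma>"
  shows "\<sigma> (inverse x) = inverse (\<sigma> x)"
proof (cases "x = 0")
  case False
  then have "\<sigma> x * \<sigma> (inverse x) = 1"
    using assms by (simp add: k_hom_1 flip: k_hom_mult)
  then show ?thesis
    by (simp add: inverse_unique)
qed (simp add: assms k_hom_0)

lemma k_hom_id: "k_hom id"
  and k_hom_comp: "k_hom \<sigma> \<Longrightarrow> k_hom \<tau> \<Longrightarrow> k_hom (\<sigma> \<circ> \<tau>)"
  by (simp_all add: k_hom_def)

lemma k_hom_eqI:
  assumes "k_hom \<sigma>" "k_hom \<tau>" "\<And>i. \<sigma> (rvar i) = \<tau> (rvar i)"
  shows "\<sigma> = \<tau>"
proof
  show "\<sigma> x = \<tau> x" for x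
    by (induction x rule: ratfun_induct)
      (simp_all add: assms k_hom_add k_hom_mult k_hom_rconst k_hom_inverse)
qed

lemma k_hom_inj:
  assumes "k_hom \<sigma>"
  shows "inj \<sigma>"
proof (rule injI)
  fix x y
  assume "\<sigma> x = \<sigma> y"
  then have "\<sigma> (x - y) = 0"
    using assms k_hom_add[of \<sigma> "x - y" y] by simp
  show "x = y"
  proof (rule ccontr)
    assume "x \<noteq> y"
    then have "\<sigma> ((x - y) * inverse (x - y)) = 1"
      using assms by (simp add: k_hom_1)
    then show False
      using \<open>\<sigma> (x - y) = 0\<close> assms by (simp add: k_hom_mult)
  qed
qed

lemma k_autI:
  assumes "k_hom \<sigma>" and "\<And>i. rvar i \<in> range \<sigma>"
  shows "k_aut \<sigma>"
proof -
  have closed: "\<sigma> a + \<sigma> b \<in> range \<sigma>" "\<sigma> a * \<sigma> b \<in> range \<sigma>"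
    "inverse (\<sigma> a) \<in> range \<sigma>" "rconst c \<in> range \<sigma>" for a b c
    using k_hom_add[OF assms(1)] k_hom_mult[OF assms(1)] k_hom_inverse[OF assms(1)]
      k_hom_rconst[OF assms(1)]
    by (metis rangeI)+
  have "x \<in> range \<sigma>" for x
    by (induction x rule: ratfun_induct) (auto simp: closed assms(2))
  then have "surj \<sigma>"
    by blast
  then show ?thesis
    using assms(1) by (simp add: k_aut_iff bij_def k_hom_inj)
qed

lemma k_aut_inv:
  assumes "k_aut \<sigma>"
  shows "k_aut (inv_into UNIV \<sigma>)"
proof -
  have "bij \<sigma>" and hom: "k_hom \<sigma>"
    using assms by (simp_all add: k_aut_iff)
  then have inv_f: "inv_into UNIV \<sigma> (\<sigma> x) = x" and f_inv: "\<sigma> (inv_into UNIV \<sigma> x) = x" for x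
    by (simp_all add: bij_is_inj bij_is_surj surj_f_inv_f)
  have "k_hom (inv_into UNIV \<sigma>)"
    unfolding k_hom_def
  proof (intro conjI allI)
    fix a b c
    show "inv_into UNIV \<sigma> (a + b) = inv_into UNIV \<sigma> a + inv_into UNIV \<sigma> b"
      using inv_f[of "inv_into UNIV \<sigma> a + inv_into UNIV \<sigma> b"] by (simp add: hom k_hom_add f_inv)
    show "inv_into UNIV \<sigma> (a * b) = inv_into UNIV \<sigma> a * inv_into UNIV \<sigma> b"
      using inv_f[of "inv_into UNIV \<sigma> a * inv_into UNIV \<sigma> b"] by (simp add: hom k_hom_mult f_inv)
    show "inv_into UNIV \<sigma> (rconst c) = rconst c"
      using inv_f[of "rconst c"] by (simp add: hom k_hom_rconst)
  qed
  then show ?thesis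
    using \<open>bij \<sigma>\<close> by (simp add: k_aut_iff bij_imp_bij_inv)
qed

lemma k_hom_fract_map:
  assumes "inj_idom_hom h" and "\<And>c. h (Poly_Mapping.single 0 c) = Poly_Mapping.single 0 c"
  shows "k_hom (fract_map h :: ('n::{finite,linorder}, 'k::field) ratfun \<Rightarrow> _)"
proof -
  interpret inj_idom_hom h
    by (fact assms(1))
  show ?thesis
    by (simp add: k_hom_def fract_map_add fract_map_mult rconst_def fract_map_Fract_1 assms(2))
qed

lemma carrier_Bir: "carrier Bir = {\<sigma>. k_aut \<sigma>}"
  and Bir_mult: "\<sigma> \<otimes>\<^bsub>Bir\<^esub> \<tau> = \<tau> \<circ> \<sigma>"
  and Bir_one: "\<one>\<^bsub>Bir\<^esub> = id"
  by (simp_all add: Bir_def)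

lemma k_aut_id: "k_aut id"
  and k_aut_comp: "k_aut \<sigma> \<Longrightarrow> k_aut \<tau> \<Longrightarrow> k_aut (\<sigma> \<circ> \<tau>)"
  by (simp_all add: k_aut_iff k_hom_id k_hom_comp bij_comp)

lemma k_aut_comp_inv: "k_aut \<sigma> \<Longrightarrow> \<sigma> \<circ> inv_into UNIV \<sigma> = id"
  by (metis k_aut_iff bij_is_surj surj_iff)

lemma k_aut_inv_comp: "k_aut \<sigma> \<Longrightarrow> inv_into UNIV \<sigma> \<circ> \<sigma> = id"
  by (metis k_aut_iff bij_is_inj inv_o_cancel)

lemma group_Bir: "group (Bir :: (('n::{finite,linorder}, 'k::field) ratfun \<Rightarrow> _) monoid)"
proof (rule groupI)
  show "\<exists>\<tau>\<in>carrier Bir. \<tau> \<otimes>\<^bsub>Bir\<^esub> \<sigma> = \<one>\<^bsub>Bir\<^esub>" if "\<sigma> \<in> carrier Bir"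
    for \<sigma> :: "('n, 'k) ratfun \<Rightarrow> _"
  proof
    show "inv_into UNIV \<sigma> \<in> carrier Bir"
      using that k_aut_inv by (simp add: carrier_Bir)
    show "inv_into UNIV \<sigma> \<otimes>\<^bsub>Bir\<^esub> \<sigma> = \<one>\<^bsub>Bir\<^esub>"
      using that by (simp add: carrier_Bir Bir_mult Bir_one k_aut_comp_inv)
  qed
qed (simp_all add: carrier_Bir Bir_mult Bir_one k_aut_id k_aut_comp comp_assoc)

lemma Bir_pow: "\<sigma> [^]\<^bsub>Bir\<^esub> n = \<sigma> ^^ n"
  by (induction n) (simp_all add: Bir_mult Bir_one funpow_Suc_right)

lemma Bir_inv:
  assumes "k_aut \<sigma>"
  shows "inv\<^bsub>Bir\<^esub> \<sigma> = inv_into UNIV \<sigma>"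
proof (rule group.inv_equality[OF group_Bir])
  show "inv_into UNIV \<sigma> \<otimes>\<^bsub>Bir\<^esub> \<sigma> = \<one>\<^bsub>Bir\<^esub>"
    using assms by (simp add: Bir_mult Bir_one k_aut_comp_inv)
qed (use assms k_aut_inv in \<open>simp_all add: carrier_Bir\<close>)

definition monom_value :: "('n::finite \<Rightarrow> 'k::comm_semiring_1) \<Rightarrow> ('n \<Rightarrow>\<^sub>0 nat) \<Rightarrow> 'k" where
  "monom_value e v = (\<Prod>i\<in>UNIV. e i ^ Poly_Mapping.lookup v i)"

definition diag :: "('n::{finite,linorder} \<Rightarrow> 'k::field) \<Rightarrow> ('n, 'k) ratfun \<Rightarrow> ('n, 'k) ratfun" where
  "diag e = fract_map (monomial_map id (monom_value e))"

lemma monom_value_single_1: "monom_value e (Poly_Mapping.single i 1) = e i"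
proof -
  have "monom_value e (Poly_Mapping.single i 1) = (\<Prod>j\<in>UNIV. if j = i then e j else 1)"
    unfolding monom_value_def by (intro prod.cong) (auto simp: lookup_single)
  then show ?thesis
    by simp
qed

lemma inj_idom_hom_diag:
  assumes "\<forall>i. e i \<noteq> 0"
  shows "inj_idom_hom
    (monomial_map id (monom_value e :: ('n::{finite,linorder} \<Rightarrow>\<^sub>0 nat) \<Rightarrow> 'k::field))"
  by (rule inj_idom_hom_monomial_map)
    (auto simp: monom_value_def lookup_add power_add prod.distrib assms)

lemma k_hom_diag: "\<forall>i. e i \<noteq> 0 \<Longrightarrow> k_hom (diag e)"
  unfolding diag_def by (rule k_hom_fract_map[OF inj_idom_hom_diag]) (simp_all add: monom_value_def)

lemma diag_rvar:
  assumes "\<forall>i. e i \<noteq> 0"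
  shows "diag e (rvar i) = rconst (e i) * rvar i"
proof -
  have "diag e (rvar i) =
      Fraction_Field.Fract (Poly_Mapping.single (Poly_Mapping.single i 1) (e i)) 1"
    using inj_idom_hom.fract_map_Fract_1[OF inj_idom_hom_diag[OF assms]]
    by (simp add: diag_def rvar_def monom_value_single_1[unfolded One_nat_def])
  then show ?thesis
    by (simp add: Fract_single rmonom_single_1[unfolded One_nat_def])
qed

lemma k_aut_diag:
  assumes "\<forall>i. e i \<noteq> 0"
  shows "k_aut (diag e)"
proof (rule k_autI[OF k_hom_diag[OF assms]])
  fix i
  have "diag e (rconst (inverse (e i)) * rvar i) = rvar i"
    using assms
    by (simp add: k_hom_mult[OF k_hom_diag[OF assms]] k_hom_rconst[OF k_hom_diag[OF assms]]
        diag_rvar mult.assoc[symmetric] flip: rconst_mult)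
  then show "rvar i \<in> range (diag e)"
    by (metis rangeI)
qed

lemma diag_comp:
  assumes "\<forall>i. e i \<noteq> 0" "\<forall>i. e' i \<noteq> 0"
  shows "diag e \<circ> diag e' = diag (e * e')"
proof (rule k_hom_eqI)
  show "k_hom (diag e \<circ> diag e')" "k_hom (diag (e * e'))"
    using assms by (simp_all add: k_hom_comp k_hom_diag)
  show "(diag e \<circ> diag e') (rvar i) = diag (e * e') (rvar i)" for i
    using assms by (simp add: diag_rvar k_hom_mult[OF k_hom_diag] k_hom_rconst[OF k_hom_diag]
        rconst_mult mult_ac)
qed

lemma diag_1: "diag 1 = id"
proof (rule k_hom_eqI)
  show "k_hom (diag 1)" "k_hom id"
    by (simp_all add: k_hom_diag k_hom_id)
qed (simp add: diag_rvar)

lemma diag_funpow: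
  assumes "\<forall>i. e i \<noteq> 0"
  shows "diag e ^^ n = diag (e ^ n)"
proof (induction n)
  case (Suc n)
  have "\<forall>i. (e ^ n) i \<noteq> 0"
    using assms by (simp add: power_fun_apply)
  then show ?case
    using Suc assms by (simp add: diag_comp times_fun_def)
qed (simp add: diag_1[unfolded one_fun_def])

section \<open>Monomial shears\<close>

text \<open>Exponent matrix M = [[2,1],[1,1]] on the coordinates i, k; det M = 1 makes it invertible.\<close>

definition shear_exp :: "'n \<Rightarrow> 'n \<Rightarrow> ('n \<Rightarrow>\<^sub>0 nat) \<Rightarrow> ('n \<Rightarrow>\<^sub>0 nat)" where
  "shear_exp i k v = v + Poly_Mapping.single i (Poly_Mapping.lookup v i + Poly_Mapping.lookup v k)
     + Poly_Mapping.single k (Poly_Mapping.lookup v i)"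

definition shear :: "'n::{finite,linorder} \<Rightarrow> 'n \<Rightarrow> ('n, 'k::field) ratfun \<Rightarrow> ('n, 'k) ratfun" where
  "shear i k = fract_map (monomial_map (shear_exp i k) (\<lambda>_. 1))"

lemma lookup_shear_exp:
  assumes "i \<noteq> k"
  shows "Poly_Mapping.lookup (shear_exp i k v) j =
    (if j = i then 2 * Poly_Mapping.lookup v i + Poly_Mapping.lookup v k
     else if j = k then Poly_Mapping.lookup v i + Poly_Mapping.lookup v k
     else Poly_Mapping.lookup v j)"
  using assms by (simp add: shear_exp_def lookup_add lookup_single)

lemma inj_shear_exp:
  assumes "i \<noteq> k"
  shows "inj (shear_exp i k)"
proof (rule injI)
  fix v w
  assume "shear_exp i k v = shear_exp i k w"
  then have eq: "Poly_Mapping.lookup (shear_exp i k v) j = Poly_Mapping.lookup (shear_exp i k w) j"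
    for j
    by simp
  have "2 * Poly_Mapping.lookup v i + Poly_Mapping.lookup v k
      = 2 * Poly_Mapping.lookup w i + Poly_Mapping.lookup w k"
    and "Poly_Mapping.lookup v i + Poly_Mapping.lookup v k
      = Poly_Mapping.lookup w i + Poly_Mapping.lookup w k"
    using eq[of i] eq[of k] assms by (simp_all add: lookup_shear_exp)
  then have "Poly_Mapping.lookup v i = Poly_Mapping.lookup w i"
    and "Poly_Mapping.lookup v k = Poly_Mapping.lookup w k"
    by linarith+
  moreover have "Poly_Mapping.lookup v j = Poly_Mapping.lookup w j" if "j \<noteq> i" "j \<noteq> k" for j
    using eq[of j] that assms by (simp add: lookup_shear_exp)
  ultimately show "v = w"
    by (metis poly_mapping_eqI)
qed

lemma inj_idom_hom_shear:
  assumes "i \<noteq> k"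
  shows "inj_idom_hom (monomial_map (shear_exp i k) (\<lambda>_. 1::'k::field))"
proof (rule inj_idom_hom_monomial_map)
  show "shear_exp i k (v + w) = shear_exp i k v + shear_exp i k w" for v w
    by (simp add: shear_exp_def lookup_add single_add ac_simps)
qed (simp_all add: shear_exp_def inj_shear_exp[OF assms])

lemma k_hom_shear: "i \<noteq> k \<Longrightarrow> k_hom (shear i k)"
  unfolding shear_def by (rule k_hom_fract_map[OF inj_idom_hom_shear]) (simp_all add: shear_exp_def)

lemma shear_rvar:
  assumes "i \<noteq> k"
  shows "shear i k (rvar j) = (if j = i then rvar i ^ 2 * rvar k else if j = k then rvar i * rvar k
    else (rvar j :: ('n::{finite,linorder}, 'k::field) ratfun))"
proof -
  have "shear i k (rvar j) = Fraction_Field.Fract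
      (monomial_map (shear_exp i k) (\<lambda>_. 1) (Poly_Mapping.single (Poly_Mapping.single j 1) 1)) 1"
    unfolding shear_def rvar_def
    by (rule inj_idom_hom.fract_map_Fract_1[OF inj_idom_hom_shear[OF assms]])
  then have "shear i k (rvar j) =
      (rmonom (shear_exp i k (Poly_Mapping.single j 1)) :: ('n, 'k) ratfun)"
    by (simp add: rmonom_def)
  moreover have "shear_exp i k (Poly_Mapping.single j 1) =
    (if j = i then Poly_Mapping.single i 1 + Poly_Mapping.single i 1 + Poly_Mapping.single k 1
     else if j = k then Poly_Mapping.single i 1 + Poly_Mapping.single k 1
     else Poly_Mapping.single j 1)"
    using assms by (simp add: shear_exp_def lookup_single ac_simps)
  ultimately show ?thesis
    by (simp add: rmonom_add rmonom_single_1[unfolded One_nat_def] power2_eq_square)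
qed

lemma k_aut_shear:
  assumes "i \<noteq> k"
  shows "k_aut (shear i k :: ('n::{finite,linorder}, 'k::field) ratfun \<Rightarrow> _)"
proof (rule k_autI[OF k_hom_shear[OF assms]])
  fix j
  let ?G = "shear i k :: ('n, 'k) ratfun \<Rightarrow> _"
  have hom: "k_hom ?G"
    using assms by (rule k_hom_shear)
  have "?G (rvar i * inverse (rvar k)) = ?G (rvar i) * inverse (?G (rvar k))"
    and "?G (rvar k ^ 2 * inverse (rvar i)) = ?G (rvar k) ^ 2 * inverse (?G (rvar i))"
    by (simp_all only: k_hom_mult[OF hom] k_hom_inverse[OF hom] power2_eq_square)
  then have "?G (rvar i * inverse (rvar k)) = rvar i"
    and "?G (rvar k ^ 2 * inverse (rvar i)) = rvar k"
    using assms by (simp_all add: shear_rvar power2_eq_square field_simps)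
  moreover have "j \<noteq> i \<Longrightarrow> j \<noteq> k \<Longrightarrow> ?G (rvar j) = rvar j"
    using assms by (simp add: shear_rvar)
  ultimately show "rvar j \<in> range ?G"
    by (metis rangeI)
qed

section \<open>The action of a shear on diagonal maps\<close>

text \<open>Conjugating by the shear transforms the diagonal entries by twist (see diag_twist below);
  untwist is the inverse transformation.\<close>

definition twist :: "'n \<Rightarrow> 'n \<Rightarrow> ('n \<Rightarrow> 'k::field) \<Rightarrow> 'n \<Rightarrow> 'k" where
  "twist i k e = e(i := e i ^ 2 * e k, k := e i * e k)"

definition untwist :: "'n \<Rightarrow> 'n \<Rightarrow> ('n \<Rightarrow> 'k::field) \<Rightarrow> 'n \<Rightarrow> 'k" where
  "untwist i k e = e(i := e i / e k, k := e k ^ 2 / e i)"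

lemma twist_nonzero: "\<forall>j. e j \<noteq> 0 \<Longrightarrow> \<forall>j. twist i k e j \<noteq> 0"
  and untwist_nonzero: "\<forall>j. e j \<noteq> 0 \<Longrightarrow> \<forall>j. untwist i k e j \<noteq> 0"
  by (simp_all add: twist_def untwist_def)

lemma twist_mult: "twist i k (x * y) = twist i k x * twist i k y"
  and untwist_mult: "untwist i k (x * y) = untwist i k x * untwist i k y"
  by (auto simp: twist_def untwist_def fun_eq_iff power2_eq_square)

lemma twist_untwist: "i \<noteq> k \<Longrightarrow> \<forall>j. e j \<noteq> 0 \<Longrightarrow> twist i k (untwist i k e) = e"
  and untwist_twist: "i \<noteq> k \<Longrightarrow> \<forall>j. e j \<noteq> 0 \<Longrightarrow> untwist i k (twist i k e) = e"
  by (auto simp: twist_def untwist_def fun_eq_iff power2_eq_square field_simps)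

text \<open>On the exponents of the coordinates i, k, twist acts by M and untwist by M^-1; the identity
  is M + M^-1 = 3, Cayley-Hamilton for M.\<close>
lemma twist_mult_untwist:
  assumes "i \<noteq> k" "\<forall>j. e j \<noteq> 0" "\<forall>j. j \<noteq> i \<longrightarrow> j \<noteq> k \<longrightarrow> e j = 1"
  shows "twist i k e * untwist i k e = e ^ 3"
proof
  fix j
  show "(twist i k e * untwist i k e) j = (e ^ 3) j"
    using assms
    by (cases "j = i"; cases "j = k")
      (simp_all add: twist_def untwist_def power_fun_apply power2_eq_square power3_eq_cube)
qed

text \<open>The Lucas numbers L_2n = tr(M^n); the recursion is again Cayley-Hamilton for M.\<close>

fun lucas_even :: "nat \<Rightarrow> nat" where
  "lucas_even 0 = 2"
| "lucas_even (Suc 0) = 3"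
| "lucas_even (Suc (Suc n)) = 3 * lucas_even (Suc n) - lucas_even n"

lemma lucas_even_le_Suc: "lucas_even n \<le> lucas_even (Suc n)"
  by (induction n) simp_all

lemma lucas_even_Suc_Suc: "lucas_even (Suc (Suc n)) + lucas_even n = 3 * lucas_even (Suc n)"
  using lucas_even_le_Suc[of n] by simp

lemma two_power_le_lucas_even: "2 ^ n \<le> lucas_even n"
proof (induction n rule: lucas_even.induct)
  case (3 n)
  have "2 * lucas_even (Suc n) \<le> lucas_even (Suc (Suc n))"
    using lucas_even_le_Suc[of n] by simp
  with "3.IH" show ?case
    by simp
qed simp_all

lemma twist_funpow_nonzero: "\<forall>j. e j \<noteq> 0 \<Longrightarrow> \<forall>j. (twist i k ^^ n) e j \<noteq> 0"
  and untwist_funpow_nonzero: "\<forall>j. e j \<noteq> 0 \<Longrightarrow> \<forall>j. (untwist i k ^^ n) e j \<noteq> 0"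
  by (rule funpow_invariant[where P = "\<lambda>x. \<forall>j. x j \<noteq> 0"]; simp add: twist_nonzero untwist_nonzero)+

lemma twist_funpow_eq_1:
    "\<forall>j. j \<noteq> i \<longrightarrow> j \<noteq> k \<longrightarrow> e j = 1 \<Longrightarrow> j \<noteq> i \<Longrightarrow> j \<noteq> k \<Longrightarrow> (twist i k ^^ n) e j = 1"
  and untwist_funpow_eq_1:
    "\<forall>j. j \<noteq> i \<longrightarrow> j \<noteq> k \<longrightarrow> e j = 1 \<Longrightarrow> j \<noteq> i \<Longrightarrow> j \<noteq> k \<Longrightarrow> (untwist i k ^^ n) e j = 1"
  by (induction n) (simp_all add: twist_def untwist_def)

lemma untwist_funpow_mult_twist_funpow_step:
  fixes e :: "'n \<Rightarrow> 'k::field"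
  assumes ik: "i \<noteq> k" and nz: "\<forall>j. e j \<noteq> 0" and supp: "\<forall>j. j \<noteq> i \<longrightarrow> j \<noteq> k \<longrightarrow> e j = 1"
  defines "E \<equiv> \<lambda>n. (untwist i k ^^ n) e * (twist i k ^^ n) e"
  shows "E (Suc (Suc n)) * E n = E (Suc n) ^ 3"
proof -
  have "twist i k (E (Suc n)) = (untwist i k ^^ n) e * (twist i k ^^ Suc (Suc n)) e"
    using twist_untwist[OF ik untwist_funpow_nonzero[OF nz]] by (simp add: E_def twist_mult)
  moreover have "untwist i k (E (Suc n)) = (untwist i k ^^ Suc (Suc n)) e * (twist i k ^^ n) e"
    using untwist_twist[OF ik twist_funpow_nonzero[OF nz]] by (simp add: E_def untwist_mult)
  ultimately have "twist i k (E (Suc n)) * untwist i k (E (Suc n)) = E (Suc (Suc n)) * E n"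
    by (simp only: E_def mult_ac)
  moreover have "\<forall>j. E (Suc n) j \<noteq> 0" "\<forall>j. j \<noteq> i \<longrightarrow> j \<noteq> k \<longrightarrow> E (Suc n) j = 1"
    using nz supp by (simp_all add: E_def twist_funpow_nonzero untwist_funpow_nonzero
        twist_funpow_eq_1 untwist_funpow_eq_1 del: funpow.simps)
  then have "twist i k (E (Suc n)) * untwist i k (E (Suc n)) = E (Suc n) ^ 3"
    by (intro twist_mult_untwist[OF ik])
  ultimately show ?thesis
    by simp
qed

lemma untwist_funpow_mult_twist_funpow:
  fixes e :: "'n \<Rightarrow> 'k::field"
  assumes ik: "i \<noteq> k" and nz: "\<forall>j. e j \<noteq> 0" and supp: "\<forall>j. j \<noteq> i \<longrightarrow> j \<noteq> k \<longrightarrow> e j = 1"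
  shows "(untwist i k ^^ n) e * (twist i k ^^ n) e = e ^ lucas_even n"
proof (induction n rule: lucas_even.induct)
  case 1
  then show ?case
    by (simp add: power2_eq_square)
next
  case 2
  then show ?case
    using twist_mult_untwist[OF ik nz supp] by (simp add: mult.commute)
next
  case (3 n)
  let ?E = "\<lambda>n. (untwist i k ^^ n) e * (twist i k ^^ n) e"
  have "?E (Suc (Suc n)) * ?E n = ?E (Suc n) ^ 3"
    by (rule untwist_funpow_mult_twist_funpow_step[OF ik nz supp])
  also have "\<dots> = (e ^ lucas_even (Suc n)) ^ 3"
    by (simp only: "3.IH")
  also have "\<dots> = e ^ (3 * lucas_even (Suc n))"
    by (metis power_mult mult.commute)
  also have "\<dots> = e ^ lucas_even (Suc (Suc n)) * ?E n"
    by (simp only: "3.IH" lucas_even_Suc_Suc[symmetric] power_add)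
  finally show ?case
    using nz by (simp add: fun_eq_iff twist_funpow_nonzero untwist_funpow_nonzero
        del: lucas_even.simps funpow.simps)
qed

lemma shear_comp_diag_twist:
  assumes ik: "i \<noteq> k" and nz: "\<forall>j. e j \<noteq> 0"
  shows "shear i k \<circ> diag (twist i k e) = diag e \<circ> shear i k"
proof (rule k_hom_eqI)
  have G: "k_hom (shear i k)" and D: "k_hom (diag e)" and D': "k_hom (diag (twist i k e))"
    using ik nz twist_nonzero[OF nz] by (simp_all add: k_hom_shear k_hom_diag)
  show "k_hom (shear i k \<circ> diag (twist i k e))"
    using G D' by (rule k_hom_comp)
  show "k_hom (diag e \<circ> shear i k)"
    using D G by (rule k_hom_comp)
  show "(shear i k \<circ> diag (twist i k e)) (rvar j) = (diag e \<circ> shear i k) (rvar j)" for j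
    using ik nz twist_nonzero[OF nz]
    by (cases "j = i"; cases "j = k")
      (simp_all add: diag_rvar shear_rvar k_hom_mult[OF G] k_hom_rconst[OF G] k_hom_mult[OF D]
        twist_def rconst_mult power2_eq_square mult_ac)
qed

lemma diag_twist:
  fixes e :: "'n::{finite,linorder} \<Rightarrow> 'k::field"
  assumes "i \<noteq> k" "\<forall>j. e j \<noteq> 0"
  shows "diag (twist i k e) = inv_into UNIV (shear i k) \<circ> diag e \<circ> shear i k"
proof -
  have "diag (twist i k e) = (inv_into UNIV (shear i k) \<circ> shear i k) \<circ> diag (twist i k e)"
    using assms(1) by (simp add: k_aut_inv_comp k_aut_shear)
  also have "\<dots> = inv_into UNIV (shear i k) \<circ> diag e \<circ> shear i k"
    by (simp only: comp_assoc shear_comp_diag_twist[OF assms])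
  finally show ?thesis .
qed

lemma diag_untwist:
  fixes e :: "'n::{finite,linorder} \<Rightarrow> 'k::field"
  assumes "i \<noteq> k" "\<forall>j. e j \<noteq> 0"
  shows "diag (untwist i k e) = shear i k \<circ> diag e \<circ> inv_into UNIV (shear i k)"
proof -
  have "diag (untwist i k e) = diag (untwist i k e) \<circ> (shear i k \<circ> inv_into UNIV (shear i k))"
    using assms(1) by (simp add: k_aut_comp_inv k_aut_shear)
  also have "\<dots> = shear i k \<circ> diag (twist i k (untwist i k e)) \<circ> inv_into UNIV (shear i k)"
    by (simp only: comp_assoc shear_comp_diag_twist[OF assms(1) untwist_nonzero[OF assms(2)]])
  also have "\<dots> = shear i k \<circ> diag e \<circ> inv_into UNIV (shear i k)"
    using assms by (simp add: twist_untwist)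
  finally show ?thesis .
qed

lemma diag_power_lucas_even:
  fixes e :: "'n::{finite,linorder} \<Rightarrow> 'k::field"
  assumes ik: "i \<noteq> k" and nz: "\<forall>j. e j \<noteq> 0" and supp: "\<forall>j. j \<noteq> i \<longrightarrow> j \<noteq> k \<longrightarrow> e j = 1"
  defines "G \<equiv> shear i k" and "H \<equiv> inv_into UNIV (shear i k)"
  shows "diag e ^^ lucas_even n = (G ^^ n \<circ> diag e \<circ> H ^^ n) \<circ> (H ^^ n \<circ> diag e \<circ> G ^^ n)"
proof -
  have untwist: "diag ((untwist i k ^^ n) e) = G ^^ n \<circ> diag e \<circ> H ^^ n"
    unfolding G_def H_def
    by (rule funpow_conj[where P = "\<lambda>x. \<forall>j. x j \<noteq> 0" and \<phi> = diag,
          OF untwist_nonzero diag_untwist[OF ik] nz])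
  have twist: "diag ((twist i k ^^ n) e) = H ^^ n \<circ> diag e \<circ> G ^^ n"
    unfolding G_def H_def
    by (rule funpow_conj[where P = "\<lambda>x. \<forall>j. x j \<noteq> 0" and \<phi> = diag,
          OF twist_nonzero diag_twist[OF ik] nz])
  have "diag (e ^ lucas_even n) = diag ((untwist i k ^^ n) e) \<circ> diag ((twist i k ^^ n) e)"
    using nz by (simp add: diag_comp twist_funpow_nonzero untwist_funpow_nonzero
        untwist_funpow_mult_twist_funpow[OF ik nz supp])
  then show ?thesis
    unfolding diag_funpow[OF nz] untwist twist .
qed

section \<open>Distortion of diagonal maps\<close>

lemma diag_supported_pow_in_word_ball:
  fixes e :: "'n::{finite,linorder} \<Rightarrow> 'k::field"
  assumes "i \<noteq> k" "\<forall>j. e j \<noteq> 0" "\<forall>j. j \<noteq> i \<longrightarrow> j \<noteq> k \<longrightarrow> e j = 1"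
    and "S \<subseteq> carrier Bir" "diag e \<in> S" "shear i k \<in> S" "inv\<^bsub>Bir\<^esub> (shear i k) \<in> S"
  shows "diag e [^]\<^bsub>Bir\<^esub> lucas_even n \<in> word_ball Bir S (4 * n + 2)"
proof -
  interpret Bir: group "Bir :: (('n, 'k) ratfun \<Rightarrow> _) monoid"
    by (rule group_Bir)
  let ?G = "shear i k" and ?H = "inv\<^bsub>Bir\<^esub> (shear i k)" and ?d = "diag e"
  have H: "?H = inv_into UNIV ?G"
    using assms(1) by (simp add: Bir_inv k_aut_shear)
  have "diag e [^]\<^bsub>Bir\<^esub> lucas_even n =
      (?G [^]\<^bsub>Bir\<^esub> n \<otimes>\<^bsub>Bir\<^esub> ?d \<otimes>\<^bsub>Bir\<^esub> ?H [^]\<^bsub>Bir\<^esub> n) \<otimes>\<^bsub>Bir\<^esub>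
      (?H [^]\<^bsub>Bir\<^esub> n \<otimes>\<^bsub>Bir\<^esub> ?d \<otimes>\<^bsub>Bir\<^esub> ?G [^]\<^bsub>Bir\<^esub> n)"
    unfolding H using assms(1-3) by (simp add: Bir_pow Bir_mult diag_power_lucas_even comp_assoc)
  moreover have "\<dots> \<in> word_ball Bir S ((n + 1 + n) + (n + 1 + n))"
  proof -
    have "?G [^]\<^bsub>Bir\<^esub> n \<in> word_ball Bir S n" "?H [^]\<^bsub>Bir\<^esub> n \<in> word_ball Bir S n"
      using assms(4,6,7) by (simp_all add: Bir.word_ball_pow)
    moreover have "?d \<in> word_ball Bir S 1"
      using assms(4,5) by (rule Bir.word_ball_incl)
    ultimately show ?thesis
      using assms(4) by (intro Bir.word_ball_mult)
  qed
  moreover have "(n + 1 + n) + (n + 1 + n) = 4 * n + 2"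
    by simp
  ultimately show ?thesis
    by (simp only:)
qed

lemma foldr_Bir_mult_diag:
  fixes es :: "('n::{finite,linorder} \<Rightarrow> 'k::field) list"
  assumes "\<forall>e\<in>set es. \<forall>j. e j \<noteq> 0"
  shows "foldr (\<otimes>\<^bsub>Bir\<^esub>) (map diag es) \<one>\<^bsub>Bir\<^esub> = diag (prod_list es)"
  using assms
proof (induction es)
  case (Cons e es)
  have "\<forall>j. prod_list es j \<noteq> 0"
    using Cons.prems by (auto simp: prod_list_fun_apply prod_list_zero_iff)
  have "foldr (\<otimes>\<^bsub>Bir\<^esub>) (map diag (e # es)) \<one>\<^bsub>Bir\<^esub> = diag e \<otimes>\<^bsub>Bir\<^esub> diag (prod_list es)"
    using Cons by simp
  also have "\<dots> = diag (prod_list es) \<circ> diag e"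
    by (simp only: Bir_mult)
  also have "\<dots> = diag (e * prod_list es)"
    using Cons.prems \<open>\<forall>j. prod_list es j \<noteq> 0\<close> by (simp add: diag_comp mult.commute)
  finally show ?case
    by (simp add: times_fun_def)
qed (simp add: Bir_one diag_1)

lemma diag_pow_in_word_ball:
  fixes a :: "'n::{finite,linorder} \<Rightarrow> 'k::field"
  assumes "\<forall>j. a j \<noteq> 0" and "\<And>i. i \<noteq> k i" and S: "S \<subseteq> carrier Bir" "\<one>\<^bsub>Bir\<^esub> \<in> S"
    and "\<And>i. diag (1(i := a i)) \<in> S" "\<And>i. shear i (k i) \<in> S" "\<And>i. inv\<^bsub>Bir\<^esub> (shear i (k i)) \<in> S"
  shows "diag a [^]\<^bsub>Bir\<^esub> lucas_even n \<in> word_ball Bir S (4 * card (UNIV :: 'n set) * Suc n)"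
proof -
  interpret Bir: group "Bir :: (('n, 'k) ratfun \<Rightarrow> _) monoid"
    by (rule group_Bir)
  obtain L where L: "distinct L" "set L = (UNIV :: 'n set)"
    using finite_distinct_list[OF finite_UNIV] by blast
  define es where "es = map (\<lambda>i. 1(i := a i) ^ lucas_even n) L"
  have "1(i := a i) ^ lucas_even n = 1(i := (a ^ lucas_even n) i)" for i
    by (rule ext) (simp add: power_fun_apply)
  then have "prod_list es = a ^ lucas_even n"
    by (simp add: es_def prod_list_fun_upd_1[OF L])
  moreover have "\<forall>e\<in>set es. \<forall>j. e j \<noteq> 0"
    using assms(1) by (simp add: es_def power_fun_apply)
  ultimately have "diag a [^]\<^bsub>Bir\<^esub> lucas_even n = foldr (\<otimes>\<^bsub>Bir\<^esub>) (map diag es) \<one>\<^bsub>Bir\<^esub>"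
    by (simp add: Bir_pow diag_funpow[OF assms(1)] foldr_Bir_mult_diag)
  moreover have "diag (1(i := a i) ^ lucas_even n) \<in> word_ball Bir S (4 * n + 2)" for i
  proof -
    have "\<forall>j. (1(i := a i)) j \<noteq> 0"
      using assms(1) by simp
    then have "diag (1(i := a i) ^ lucas_even n) = diag (1(i := a i)) [^]\<^bsub>Bir\<^esub> lucas_even n"
      by (simp add: Bir_pow diag_funpow)
    also have "\<dots> \<in> word_ball Bir S (4 * n + 2)"
      by (rule diag_supported_pow_in_word_ball[where i = i and k = "k i"])
        (use assms in auto)
    finally show ?thesis .
  qed
  then have "set (map diag es) \<subseteq> word_ball Bir S (4 * n + 2)"
    by (auto simp: es_def)
  moreover have "length (map diag es) = card (UNIV :: 'n set)"
    using distinct_card[OF L(1)] L(2) by (simp add: es_def)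
  ultimately have
    "diag a [^]\<^bsub>Bir\<^esub> lucas_even n \<in> word_ball Bir S (card (UNIV :: 'n set) * (4 * n + 2))"
    using Bir.word_ball_foldr[OF S(1)] by metis
  also have "\<dots> \<subseteq> word_ball Bir S (4 * card (UNIV :: 'n set) * Suc n)"
    using S by (intro Bir.word_ball_mono) simp_all
  finally show ?thesis .
qed

theorem lemma3p2:
  fixes u :: "('n::{finite,linorder}, 'k::field) ratfun \<Rightarrow> ('n, 'k) ratfun"
    and a :: "'n \<Rightarrow> 'k"
  assumes "card (UNIV :: 'n set) \<ge> 2"
    and "\<And>i. a i \<noteq> 0"
    and "u \<in> carrier Bir"
    and "\<And>i. u (rvar i) = rconst (a i) * rvar i"
  shows "\<exists>S. finite S \<and> S \<subseteq> carrier Bir \<and> \<one>\<^bsub>Bir\<^esub> \<in> S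
           \<and> (\<forall>s\<in>S. inv\<^bsub>Bir\<^esub> s \<in> S) \<and> u \<in> generate Bir S
           \<and> asym_preceq (\<lambda>n. exp (real n)) (distortion Bir S u)"
proof -
  interpret Bir: group "Bir :: (('n, 'k) ratfun \<Rightarrow> _) monoid"
    by (rule group_Bir)
  obtain k :: "'n \<Rightarrow> 'n" where k: "\<And>i. i \<noteq> k i"
    using ex_fixpoint_free_map assms(1) by blast
  have a: "\<forall>j. a j \<noteq> 0"
    using assms(2) by simp
  define X where "X = insert u (range (\<lambda>i. diag (1(i := a i))) \<union> range (\<lambda>i. shear i (k i)))"
  define S where "S = insert \<one>\<^bsub>Bir\<^esub> (X \<union> m_inv Bir ` X)"
  have "X \<subseteq> carrier Bir"
    using assms(3) a k by (auto simp: X_def carrier_Bir k_aut_diag k_aut_shear)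
  then have S: "finite S" "S \<subseteq> carrier Bir" "\<one>\<^bsub>Bir\<^esub> \<in> S" "\<forall>s\<in>S. inv\<^bsub>Bir\<^esub> s \<in> S"
    unfolding S_def using Bir.inv_in_symmetric_closure by (auto simp: X_def)
  have u: "u = diag a"
    using assms(3,4) a
    by (intro k_hom_eqI) (simp_all add: carrier_Bir k_aut_iff k_hom_diag diag_rvar)
  have "u [^]\<^bsub>Bir\<^esub> lucas_even n \<in> word_ball Bir S (4 * card (UNIV :: 'n set) * Suc n)" for n
    unfolding u using a k S(2,3) by (intro diag_pow_in_word_ball) (auto simp: S_def X_def u)
  then have "asym_preceq (\<lambda>n. exp (real n)) (distortion Bir S u)"
    using S(2,3) assms(1) two_power_le_lucas_even
    by (intro Bir.exp_preceq_distortion[where K = "4 * card (UNIV :: 'n set)"]) simp_all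
  moreover have "u \<in> generate Bir S"
    by (simp add: generate.incl S_def X_def)
  ultimately show ?thesis
    using S by blast
qed

end
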